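(* Let $(X,d)$ be a metric space and $\ell:X\to[0,+\infty)$ lower semicontinuous with $\inf_X\ell=0$. If $\lambda>0$, then $u_\lambda:=T_\lambda^\infty\frac{\ell}{\lambda}$ is the Perron solution of $(\mathcal{G}_\lambda)$. If $\lambda=0$ and $\ell$ satisfies $(H_0)$, then the function \[u_0(x):=\inf\Big\{\sum_{n=0}^\infty\ell(x_n)d(x_n,x_{n+1}):\{x_n\}_n\subset X,\ x_0=x,\ \lim_{n\to\infty}\ell(x_n)=0\Big\},\quad x\in X,\] is the Perron solution of $(\mathcal{G}_0)$.
   Context: Global slope: $G[u](x)=\sup_{y\neq x}\frac{(u(x)-u(y))_+}{d(x,y)}$ if $u(x)<+\infty$, $G[u](x)=+\infty$ otherwise. A solution of $(\mathcal{G}_\lambda)$ ($\lambda\ge0$) is a lower semicontinuous $u:X\to\mathbb{R}\cup\{+\infty\}$ with $\inf_Xu=0$ and $\lambda u+G[u]=\ell$ on $X$. The Perron solution of $(\mathcal{G}_\lambda)$ is a solution $u$ such that $u(x)=\sup\{v(x): v\text{ solution of }(\mathcal{G}_\lambda)\}$ for all $x$. For $u:X\to[0,+\infty]$, $T_\lambda u(x)=\inf_{y\in X}\frac{u(y)+\ell(x)d(x,y)}{1+\lambda d(x,y)}$ and $T_\lambda^\infty u=\lim_{n\to\infty}T_\lambda^nu$ pointwise. Hypothesis $(H_0)$: there is $\{\bar x_n\}_n\subset X$ with $\sum_n\ell(\bar x_n)d(\bar x_n,\bar x_{n+1})<+\infty$ and $\lim_n\ell(\bar x_n)=0$. *)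

theory Defs
  imports "HOL-Analysis.Analysis"
begin

definition lsc :: "('a::topological_space \<Rightarrow> 'b::linorder) \<Rightarrow> bool" where
  "lsc f \<longleftrightarrow> (\<forall>t. open {y. t < f y})"

(* global slope; values in [0,+\<infinity>]; the 0 in the Sup only matters when X is a singleton *)
definition gslope :: "('a::metric_space \<Rightarrow> ereal) \<Rightarrow> 'a \<Rightarrow> ereal" where
  "gslope u x = (if u x < \<infinity>
      then Sup ({0} \<union> {max (u x - u y) 0 / ereal (dist x y) | y. y \<noteq> x})
      else \<infinity>)"

definition is_solution :: "real \<Rightarrow> ('a::metric_space \<Rightarrow> real) \<Rightarrow> ('a \<Rightarrow> ereal) \<Rightarrow> bool" where
  "is_solution lam l u \<longleftrightarrow> lsc u \<and> (\<forall>x. u x \<noteq> -\<infinity>) \<and> (INF x. u x) = 0 \<and>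
     (\<forall>x. ereal lam * u x + gslope u x = ereal (l x))"

definition is_perron_solution :: "real \<Rightarrow> ('a::metric_space \<Rightarrow> real) \<Rightarrow> ('a \<Rightarrow> ereal) \<Rightarrow> bool" where
  "is_perron_solution lam l u \<longleftrightarrow> is_solution lam l u \<and>
     (\<forall>x. u x = Sup {v x | v. is_solution lam l v})"

definition Top :: "real \<Rightarrow> ('a::metric_space \<Rightarrow> real) \<Rightarrow> ('a \<Rightarrow> ereal) \<Rightarrow> 'a \<Rightarrow> ereal" where
  "Top lam l u x = (INF y. (u y + ereal (l x * dist x y)) / ereal (1 + lam * dist x y))"

definition Top_inf :: "real \<Rightarrow> ('a::metric_space \<Rightarrow> real) \<Rightarrow> ('a \<Rightarrow> ereal) \<Rightarrow> 'a \<Rightarrow> ereal" where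
  "Top_inf lam l u x = lim (\<lambda>n. ((Top lam l) ^^ n) u x)"

definition H0 :: "('a::metric_space \<Rightarrow> real) \<Rightarrow> bool" where
  "H0 l \<longleftrightarrow> (\<exists>xs::nat \<Rightarrow> 'a. summable (\<lambda>n. l (xs n) * dist (xs n) (xs (Suc n))) \<and>
                  (\<lambda>n. l (xs n)) \<longlonglongrightarrow> 0)"

definition u0 :: "('a::metric_space \<Rightarrow> real) \<Rightarrow> 'a \<Rightarrow> ereal" where
  "u0 l x = (INF xs \<in> {xs::nat \<Rightarrow> 'a. xs 0 = x \<and> (\<lambda>n. l (xs n)) \<longlonglongrightarrow> 0}.
               (\<Sum>n. ereal (l (xs n) * dist (xs n) (xs (Suc n)))))"

end

(* Solutions of (G_lam) are the real subsolutions u, i.e. u x - u y <= (l x - lam u x) d(x,y),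
   whose global slope is exactly l - lam u. A largest element F of a class of subsolutions already
   has this slope: where its slope were smaller, raising F by a small cone around that point stays a
   subsolution, since lower semicontinuity of l keeps l large near the point, and contradicts
   maximality.
   For lam > 0 the class consists of the subsolutions below l/lam. Since T_lam u <= u, and T_lam
   preserves lying above a subsolution, the decreasing limit T_lam^oo(l/lam) is the largest of them.
   For lam = 0 the class consists of the subsolutions that become small along every path of finite
   cost on which l tends to 0. Chaining the subsolution inequality along such paths shows that u_0
   is the largest of them.
   Every solution belongs to the class, so the maximal element is the Perron solution. *)

theory Submission
  imports Defs
begin

(* Real-valued u with lam u + G[u] <= l; see gslope_le_iff. *)
definition is_subsolution :: "real \<Rightarrow> ('a::metric_space \<Rightarrow> real) \<Rightarrow> ('a \<Rightarrow> real) \<Rightarrow> bool" where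
  "is_subsolution lam l f \<longleftrightarrow> (\<forall>x y. f x - f y \<le> (l x - lam * f x) * dist x y)"

lemma gslope_nonneg: "0 \<le> gslope u x"
  unfolding gslope_def by (auto intro: Sup_upper)

lemma gslope_le_iff:
  fixes f :: "'a::metric_space \<Rightarrow> real"
  shows "gslope (\<lambda>x. ereal (f x)) x \<le> ereal c \<longleftrightarrow> 0 \<le> c \<and> (\<forall>y. f x - f y \<le> c * dist x y)"
proof -
  have quotient: "max (ereal (f x) - ereal (f y)) 0 / ereal (dist x y) = ereal (max (f x - f y) 0 / dist x y)"
    if "y \<noteq> x" for y
    using that by (simp add: max_def zero_ereal_def)
  have "gslope (\<lambda>x. ereal (f x)) x \<le> ereal c \<longleftrightarrow>
      0 \<le> c \<and> (\<forall>y. y \<noteq> x \<longrightarrow> max (f x - f y) 0 / dist x y \<le> c)"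
    unfolding gslope_def using quotient by (auto simp: Sup_le_iff zero_ereal_def)
  also have "\<dots> \<longleftrightarrow> 0 \<le> c \<and> (\<forall>y. f x - f y \<le> c * dist x y)"
  proof (intro conj_cong refl iffI allI impI)
    fix y assume "\<forall>y. y \<noteq> x \<longrightarrow> max (f x - f y) 0 / dist x y \<le> c"
    then show "f x - f y \<le> c * dist x y"
      by (cases "y = x") (auto simp: divide_le_eq)
  qed (auto simp: divide_le_eq)
  finally show ?thesis .
qed

lemma subsolution_imp_lsc:
  fixes f :: "'a::metric_space \<Rightarrow> real"
  assumes "is_subsolution lam l f"
  shows "lsc (\<lambda>x. ereal (f x))"
  unfolding lsc_def open_dist
proof (intro allI ballI)
  fix t :: ereal and x assume "x \<in> {y. t < ereal (f y)}"
  then have tx: "t < ereal (f x)" by simp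
  define K where "K = \<bar>l x - lam * f x\<bar> + 1"
  have K: "K > 0" by (simp add: K_def add_nonneg_pos)
  show "\<exists>e>0. \<forall>y. dist y x < e \<longrightarrow> y \<in> {y. t < ereal (f y)}"
  proof (cases t)
    case (real s)
    have "t < ereal (f y)" if "dist y x < (f x - s) / K" for y
    proof -
      have "f x - f y \<le> (l x - lam * f x) * dist x y"
        using assms by (simp add: is_subsolution_def)
      also have "\<dots> \<le> K * dist x y"
        unfolding K_def by (intro mult_right_mono) auto
      also have "\<dots> < f x - s"
        using that K by (simp add: dist_commute pos_less_divide_eq mult.commute)
      finally show ?thesis using real by simp
    qed
    then show ?thesis using real tx K by (intro exI[of _ "(f x - s) / K"]) auto
  qed (use tx in \<open>auto intro: exI[of _ 1]\<close>)
qed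

lemma solution_imp_subsolution:
  fixes l :: "'a::metric_space \<Rightarrow> real"
  assumes sol: "is_solution lam l v" and lam: "0 \<le> lam"
  obtains f where "v = (\<lambda>x. ereal (f x))" "is_subsolution lam l f" "\<And>x. lam * f x \<le> l x"
    "(INF x. ereal (f x)) = 0"
proof -
  have eq: "ereal lam * v x + gslope v x = ereal (l x)" for x
    using sol by (simp add: is_solution_def)
  have "v x \<noteq> \<infinity>" for x
  proof
    assume "v x = \<infinity>"
    then have "gslope v x = \<infinity>" by (simp add: gslope_def)
    with eq[of x] \<open>v x = \<infinity>\<close> lam show False by (cases "lam = 0") auto
  qed
  moreover have "v x \<noteq> -\<infinity>" for x
    using sol by (simp add: is_solution_def)
  ultimately have v: "v = (\<lambda>x. ereal (real_of_ereal (v x)))"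
    by (intro ext ereal_real'[symmetric]) auto
  define f where "f x = real_of_ereal (v x)" for x
  have "gslope (\<lambda>x. ereal (f x)) x = ereal (l x - lam * f x)" for x
  proof -
    have "ereal lam * ereal (f x) + gslope (\<lambda>x. ereal (f x)) x = ereal (l x)"
      using eq[of x] v unfolding f_def by metis
    then show ?thesis by (cases "gslope (\<lambda>x. ereal (f x)) x") auto
  qed
  then have slope: "0 \<le> l x - lam * f x \<and> (\<forall>y. f x - f y \<le> (l x - lam * f x) * dist x y)" for x
    by (metis gslope_le_iff order_refl)
  show ?thesis
  proof (rule that)
    show "v = (\<lambda>x. ereal (f x))" using v by (simp add: f_def)
    then show "(INF x. ereal (f x)) = 0" using sol by (simp add: is_solution_def)
    show "is_subsolution lam l f" using slope by (simp add: is_subsolution_def)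
    show "lam * f x \<le> l x" for x using slope[of x] by simp
  qed
qed

lemma subsolution_bump:
  fixes F l :: "'a::metric_space \<Rightarrow> real"
  assumes lam: "0 \<le> lam" and lsc_l: "lsc l" and sub: "is_subsolution lam l F"
    and c: "0 \<le> c" "c < l x - lam * F x" and slope: "\<And>y. F x - F y \<le> c * dist x y"
  obtains w k where "is_subsolution lam l w" "0 < k" "\<And>z. F z \<le> w z"
    "\<And>z. F z < w z \<Longrightarrow> lam * w z + k \<le> l z" "F x < w x"
proof -
  define e where "e = (l x - lam * F x - c) / 4"
  have e: "e > 0" using c by (simp add: e_def)
  have "open {z. l x - e < l z}" using lsc_l by (simp add: lsc_def)
  moreover have "x \<in> {z. l x - e < l z}" using e by simp
  ultimately obtain r where r: "r > 0" "\<forall>z. dist z x < r \<longrightarrow> z \<in> {z. l x - e < l z}"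
    unfolding open_dist by blast
  define eta where "eta = min (e * r / 2) (e / (lam + 1))"
  have eta: "eta > 0" using e r lam by (simp add: eta_def)
  define phi where "phi z = F x + eta - (c + e) * dist x z" for z
  define w where "w z = max (F z) (phi z)" for z
  have near: "l x - e < l z" if "F z < phi z" for z
  proof -
    have "e * dist x z < e * (r / 2)"
      using slope[of z] that unfolding phi_def eta_def by (simp add: algebra_simps)
    then have "dist x z < r / 2" using e by (simp only: mult_less_cancel_left_pos)
    then have "dist x z < r" using zero_le_dist[of x z] by linarith
    then show ?thesis using r by (simp add: dist_commute)
  qed
  have lam_eta: "lam * eta \<le> e"
  proof -
    have "lam * eta \<le> lam * (e / (lam + 1))" using lam by (intro mult_left_mono) (simp_all add: eta_def)
    also have "\<dots> \<le> e" using lam e by (simp add: field_simps)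
    finally show ?thesis .
  qed
  have phi_bound: "lam * phi z + (c + e) + e \<le> l z" if "F z < phi z" for z
  proof -
    have "lam * phi z \<le> lam * (F x + eta)"
      using lam c e unfolding phi_def by (intro mult_left_mono) auto
    then have "lam * phi z \<le> lam * F x + e" using lam_eta by (simp add: distrib_left)
    moreover have "4 * e = l x - lam * F x - c" by (simp add: e_def)
    ultimately show ?thesis using near[OF that] by linarith
  qed
  have "is_subsolution lam l w"
    unfolding is_subsolution_def
  proof (intro allI)
    fix z y
    show "w z - w y \<le> (l z - lam * w z) * dist z y"
    proof (cases "F z < phi z")
      case True
      have "phi z - phi y = (c + e) * (dist x y - dist x z)" by (simp add: phi_def algebra_simps)
      also have "\<dots> \<le> (c + e) * dist z y"
        using dist_triangle[of x y z] c e by (intro mult_left_mono) auto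
      also have "\<dots> \<le> (l z - lam * phi z) * dist z y"
        using phi_bound[OF True] e by (intro mult_right_mono) auto
      finally show ?thesis using True by (simp add: w_def)
    next
      case False
      then have wz: "w z = F z" by (simp add: w_def)
      have "F z - F y \<le> (l z - lam * F z) * dist z y"
        using sub by (simp add: is_subsolution_def)
      moreover have "F y \<le> w y" by (simp add: w_def)
      ultimately show ?thesis unfolding wz by linarith
    qed
  qed
  moreover have "lam * w z + e \<le> l z" if "F z < w z" for z
  proof -
    have "F z < phi z" "w z = phi z" using that by (auto simp: w_def)
    then show ?thesis using phi_bound[of z] e c(1) by simp
  qed
  moreover have "F x < w x" using eta by (simp add: w_def phi_def)
  moreover have "F z \<le> w z" for z by (simp add: w_def)
  ultimately show ?thesis using that e by blast
qed

lemma gslope_eq_if_no_bump: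
  fixes F l :: "'a::metric_space \<Rightarrow> real"
  assumes lam: "0 \<le> lam" and lsc_l: "lsc l" and sub: "is_subsolution lam l F"
    and bounded: "lam * F x \<le> l x"
    and no_bump: "\<And>w k. is_subsolution lam l w \<Longrightarrow> 0 < k \<Longrightarrow> (\<And>z. F z \<le> w z) \<Longrightarrow>
      (\<And>z. F z < w z \<Longrightarrow> lam * w z + k \<le> l z) \<Longrightarrow> w x \<le> F x"
  shows "gslope (\<lambda>x. ereal (F x)) x = ereal (l x - lam * F x)"
proof (rule antisym)
  show "gslope (\<lambda>x. ereal (F x)) x \<le> ereal (l x - lam * F x)"
    using sub bounded by (simp add: gslope_le_iff is_subsolution_def)
  show "ereal (l x - lam * F x) \<le> gslope (\<lambda>x. ereal (F x)) x"
  proof (rule ccontr)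
    assume "\<not> ?thesis"
    moreover have "0 \<le> gslope (\<lambda>x. ereal (F x)) x" by (rule gslope_nonneg)
    ultimately obtain c where gs: "gslope (\<lambda>x. ereal (F x)) x = ereal c"
      and c_less: "c < l x - lam * F x"
      by (cases "gslope (\<lambda>x. ereal (F x)) x") auto
    from gs have c: "0 \<le> c" "\<And>y. F x - F y \<le> c * dist x y"
      using gslope_le_iff[of F x c] by simp_all
    obtain w k where w: "is_subsolution lam l w" "0 < k" "\<And>z. F z \<le> w z"
      "\<And>z. F z < w z \<Longrightarrow> lam * w z + k \<le> l z" and raised: "F x < w x"
      using subsolution_bump[OF lam lsc_l sub c(1) c_less c(2)] by metis
    from no_bump[OF w] raised show False by simp
  qed
qed

lemma is_perron_solutionI:
  fixes F l :: "'a::metric_space \<Rightarrow> real"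
  assumes lam: "0 \<le> lam" and lsc_l: "lsc l" and sub: "is_subsolution lam l F"
    and bounded: "\<And>x. lam * F x \<le> l x" and inf: "(INF x. ereal (F x)) = 0"
    and no_bump: "\<And>w k x. is_subsolution lam l w \<Longrightarrow> 0 < k \<Longrightarrow> (\<And>z. F z \<le> w z) \<Longrightarrow>
      (\<And>z. F z < w z \<Longrightarrow> lam * w z + k \<le> l z) \<Longrightarrow> w x \<le> F x"
    and above: "\<And>v x. is_solution lam l v \<Longrightarrow> v x \<le> ereal (F x)"
  shows "is_perron_solution lam l (\<lambda>x. ereal (F x))"
proof -
  have "gslope (\<lambda>x. ereal (F x)) x = ereal (l x - lam * F x)" for x
    by (rule gslope_eq_if_no_bump[OF lam lsc_l sub bounded no_bump])
  then have sol: "is_solution lam l (\<lambda>x. ereal (F x))"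
    using subsolution_imp_lsc[OF sub] inf by (simp add: is_solution_def)
  have "ereal (F x) = Sup {v x | v. is_solution lam l v}" for x
    by (rule antisym) (use sol above in \<open>auto intro: Sup_upper Sup_least\<close>)
  with sol show ?thesis by (simp add: is_perron_solution_def)
qed

lemma INF_ereal_eq_0:
  fixes f :: "'a \<Rightarrow> real"
  assumes "\<And>x. 0 \<le> f x" and "\<And>e. 0 < e \<Longrightarrow> \<exists>x. f x < e"
  shows "(INF x. ereal (f x)) = 0"
proof (rule antisym)
  show "(INF x. ereal (f x)) \<le> 0"
  proof (rule ereal_le_epsilon2)
    fix e :: real assume "0 < e"
    with assms(2) obtain x where "f x < e" by blast
    then have "(INF x. ereal (f x)) \<le> ereal e" by (intro INF_lower2[of x]) auto
    then show "(INF x. ereal (f x)) \<le> 0 + ereal e" by simp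
  qed
qed (use assms(1) in \<open>auto intro: INF_greatest\<close>)

lemma Top_le_self: "Top lam l u x \<le> u x"
  unfolding Top_def by (rule INF_lower2[of x]) (simp_all flip: one_ereal_def)

lemma Top_nonneg:
  assumes "0 \<le> lam" "0 \<le> l x" "\<And>y. 0 \<le> u y"
  shows "0 \<le> Top lam l u x"
  unfolding Top_def
proof (rule INF_greatest)
  fix y
  have "0 < 1 + lam * dist x y" using assms(1) by (simp add: add_pos_nonneg)
  moreover have "0 \<le> u y + ereal (l x * dist x y)" using assms by simp
  ultimately show "0 \<le> (u y + ereal (l x * dist x y)) / ereal (1 + lam * dist x y)"
    by (simp add: ereal_le_divide_pos)
qed

lemma Top_iterate_bounds:
  assumes "0 \<le> lam" "\<And>x. 0 \<le> l x" "\<And>x. 0 \<le> u x"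
  shows "0 \<le> (Top lam l ^^ n) u x \<and> (Top lam l ^^ n) u x \<le> u x"
proof (induction n arbitrary: x)
  case (Suc n)
  have "0 \<le> Top lam l ((Top lam l ^^ n) u) x"
    by (rule Top_nonneg) (use assms Suc.IH in auto)
  moreover have "Top lam l ((Top lam l ^^ n) u) x \<le> u x"
    using Top_le_self Suc.IH order_trans by metis
  ultimately show ?case by simp
qed (use assms(3) in simp)

lemma Top_inf_eq_INF: "Top_inf lam l u x = (INF n. (Top lam l ^^ n) u x)"
proof -
  have "decseq (\<lambda>n. (Top lam l ^^ n) u x)"
    by (rule decseq_SucI) (simp add: Top_le_self)
  then show ?thesis unfolding Top_inf_def by (intro limI LIMSEQ_INF)
qed

lemma subsolution_le_Top:
  assumes lam: "0 \<le> lam" and sub: "is_subsolution lam l w" and below: "\<And>y. ereal (w y) \<le> u y"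
  shows "ereal (w x) \<le> Top lam l u x"
  unfolding Top_def
proof (rule INF_greatest)
  fix y
  have den: "0 < 1 + lam * dist x y" using lam by (simp add: add_pos_nonneg)
  have "ereal (1 + lam * dist x y) * ereal (w x) \<le> ereal (w y + l x * dist x y)"
    using sub by (simp add: is_subsolution_def algebra_simps)
  also have "\<dots> \<le> u y + ereal (l x * dist x y)"
    using add_right_mono[OF below[of y], of "ereal (l x * dist x y)"] by simp
  finally have "ereal (1 + lam * dist x y) * ereal (w x) \<le> u y + ereal (l x * dist x y)" .
  then show "ereal (w x) \<le> (u y + ereal (l x * dist x y)) / ereal (1 + lam * dist x y)"
    using den by (simp add: ereal_le_divide_pos)
qed

lemma subsolution_le_Top_inf:
  assumes "0 \<le> lam" "is_subsolution lam l w" "\<And>y. ereal (w y) \<le> u y"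
  shows "ereal (w x) \<le> Top_inf lam l u x"
proof -
  have "ereal (w x) \<le> (Top lam l ^^ n) u x" for n
  proof (induction n arbitrary: x)
    case (Suc n)
    then show ?case using subsolution_le_Top[OF assms(1,2)] by simp
  qed (use assms(3) in simp)
  then show ?thesis unfolding Top_inf_eq_INF by (rule INF_greatest)
qed

lemma Top_inf_real_subsolution:
  fixes l :: "'a::metric_space \<Rightarrow> real" and u :: "'a \<Rightarrow> ereal"
  assumes lam: "0 \<le> lam" and l: "\<And>x. 0 \<le> l x" and u: "\<And>x. 0 \<le> u x" "\<And>x. u x < \<infinity>"
  obtains V :: "'a \<Rightarrow> real" where "Top_inf lam l u = (\<lambda>x. ereal (V x))" "is_subsolution lam l V"
    "\<And>x. 0 \<le> V x" "\<And>x. ereal (V x) \<le> u x"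
proof -
  let ?T = "\<lambda>n. (Top lam l ^^ n) u"
  have T: "0 \<le> ?T n x \<and> ?T n x \<le> u x" for n x
    by (rule Top_iterate_bounds[OF lam l u(1)])
  have inf_bounds: "0 \<le> Top_inf lam l u x \<and> Top_inf lam l u x \<le> u x" for x
    unfolding Top_inf_eq_INF using T by (auto intro: INF_greatest INF_lower2[of 0])
  define V where "V x = real_of_ereal (Top_inf lam l u x)" for x
  have V: "Top_inf lam l u = (\<lambda>x. ereal (V x))"
  proof
    fix x show "Top_inf lam l u x = ereal (V x)"
      using inf_bounds[of x] u(2)[of x] unfolding V_def by (cases "Top_inf lam l u x") auto
  qed
  have "is_subsolution lam l V"
    unfolding is_subsolution_def
  proof (intro allI)
    fix x y :: 'a
    have den: "0 < 1 + lam * dist x y" using lam by (simp add: add_pos_nonneg)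
    have "ereal (V x * (1 + lam * dist x y) - l x * dist x y) \<le> ?T n y" for n
    proof -
      have "ereal (V x) \<le> ?T (Suc n) x"
        using V Top_inf_eq_INF[of lam l u x] by (metis INF_lower UNIV_I)
      also have "\<dots> \<le> (?T n y + ereal (l x * dist x y)) / ereal (1 + lam * dist x y)"
        unfolding funpow.simps comp_def Top_def by (rule INF_lower) simp
      finally have "ereal ((1 + lam * dist x y) * V x) \<le> ?T n y + ereal (l x * dist x y)"
        using den by (simp add: ereal_le_divide_pos)
      moreover obtain r where "?T n y = ereal r"
        using T[of n y] u(2)[of y] by (cases "?T n y") auto
      ultimately show ?thesis by (simp add: algebra_simps)
    qed
    moreover have "ereal (V y) = (INF n. ?T n y)" using V Top_inf_eq_INF by metis
    ultimately have "ereal (V x * (1 + lam * dist x y) - l x * dist x y) \<le> ereal (V y)"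
      by (simp add: INF_greatest)
    then show "V x - V y \<le> (l x - lam * V x) * dist x y" by (simp add: algebra_simps)
  qed
  with that V inf_bounds show ?thesis by simp
qed

lemma is_perron_solution_Top_inf:
  fixes l :: "'a::metric_space \<Rightarrow> real"
  assumes lam: "0 < lam" and nonneg: "\<And>x. 0 \<le> l x" and lsc_l: "lsc l" and inf0: "(INF x. l x) = 0"
  shows "is_perron_solution lam l (Top_inf lam l (\<lambda>x. ereal (l x / lam)))"
proof -
  obtain V where V: "Top_inf lam l (\<lambda>x. ereal (l x / lam)) = (\<lambda>x. ereal (V x))"
    "is_subsolution lam l V" "\<And>x. 0 \<le> V x" "\<And>x. V x \<le> l x / lam"
    using Top_inf_real_subsolution[where l = l and u = "\<lambda>x. ereal (l x / lam)" and lam = lam] lam nonneg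
    by auto
  have V_le: "lam * V x \<le> l x" for x
    using V(4)[of x] lam by (simp add: le_divide_eq mult.commute)
  have maximal: "w x \<le> V x" if "is_subsolution lam l w" "\<And>z. lam * w z \<le> l z" for w x
  proof -
    have "ereal (w z) \<le> ereal (l z / lam)" for z
      using that(2)[of z] lam by (simp add: le_divide_eq mult.commute)
    from subsolution_le_Top_inf[OF _ that(1) this] lam V(1) show ?thesis by simp
  qed
  have small: "\<exists>x. V x < e" if "0 < e" for e
  proof -
    have "bdd_below (range l)" using nonneg by (intro bdd_belowI[of _ 0]) auto
    moreover have "0 < e * lam" using that lam by simp
    ultimately obtain x where "l x < e * lam" using inf0 cInf_less_iff[of "range l" "e * lam"] by auto
    then have "l x / lam < e" using lam by (simp add: pos_divide_less_eq)
    with V(4)[of x] show ?thesis by (intro exI[of _ x]) linarith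
  qed
  show ?thesis unfolding V(1)
  proof (rule is_perron_solutionI[OF less_imp_le[OF lam] lsc_l V(2) V_le])
    show "(INF x. ereal (V x)) = 0" using V(3) small by (rule INF_ereal_eq_0)
  next
    fix w k x
    assume w: "is_subsolution lam l w" "0 < k" "\<And>z. V z \<le> w z"
      "\<And>z. V z < w z \<Longrightarrow> lam * w z + k \<le> l z"
    have "lam * w z \<le> l z" for z
      using w(2) w(3)[of z] w(4)[of z] V_le[of z] by (cases "V z < w z") auto
    with w(1) show "w x \<le> V x" by (rule maximal)
  next
    fix v x assume "is_solution lam l v"
    with lam obtain f where "v = (\<lambda>x. ereal (f x))" "is_subsolution lam l f" "\<And>x. lam * f x \<le> l x"
      by (auto elim: solution_imp_subsolution)
    with maximal show "v x \<le> ereal (V x)" by simp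
  qed
qed

lemma suminf_ereal_nonneg:
  fixes f :: "nat \<Rightarrow> real"
  assumes "\<And>n. 0 \<le> f n"
  shows "(\<Sum>n. ereal (f n)) = (if summable f then ereal (suminf f) else \<infinity>)"
proof (cases "summable f")
  case False
  have "(\<Sum>n. ereal (f n)) = \<infinity>"
  proof (rule ccontr)
    assume "(\<Sum>n. ereal (f n)) \<noteq> \<infinity>"
    then have "summable (\<lambda>n. real_of_ereal (ereal (f n)))"
      using assms by (intro summable_real_of_ereal) auto
    with False show False by simp
  qed
  with False show ?thesis by simp
qed (simp add: suminf_ereal')

lemma relative_growth_bound:
  fixes D a :: "nat \<Rightarrow> real"
  assumes D: "\<And>n. 0 \<le> D n" and a: "\<And>n. 0 \<le> a n" "summable a"
    and growth: "\<And>n. D (Suc n) \<le> D n * (1 + a n)"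
  shows "D n \<le> D 0 * exp (suminf a)"
proof -
  have "D n \<le> D 0 * exp (\<Sum>i<n. a i)"
  proof (induction n)
    case (Suc n)
    have "D n * (1 + a n) \<le> D n * exp (a n)" using D[of n] by (intro mult_left_mono) auto
    with growth[of n] have "D (Suc n) \<le> D n * exp (a n)" by linarith
    also have "\<dots> \<le> D 0 * exp (\<Sum>i<n. a i) * exp (a n)"
      using Suc.IH by (simp add: mult_right_mono)
    finally show ?case by (simp add: exp_add mult.assoc)
  qed simp
  also have "\<dots> \<le> D 0 * exp (suminf a)"
    using D[of 0] sum_le_suminf[OF a(2), of "{..<n}"] a(1) by (simp add: mult_left_mono)
  finally show ?thesis .
qed

definition path_cost :: "('a::metric_space \<Rightarrow> real) \<Rightarrow> (nat \<Rightarrow> 'a) \<Rightarrow> nat \<Rightarrow> real" where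
  "path_cost l xs n = l (xs n) * dist (xs n) (xs (Suc n))"

lemma u0_eq_INF_path_cost:
  "u0 l x = (INF xs \<in> {xs. xs 0 = x \<and> (\<lambda>n. l (xs n)) \<longlonglongrightarrow> 0}. \<Sum>n. ereal (path_cost l xs n))"
  by (simp add: u0_def path_cost_def)

text \<open>If f stayed above e along the path, pick y with f y < e/2. The subsolution inequality gives
  e/2 < l (xs n) * dist (xs n) y, so each step multiplies the distance to y by at most
  1 + 2/e * path_cost; the distance stays bounded, and l (xs n) stays bounded away from 0.\<close>

lemma subsolution_small_along_path:
  fixes f l :: "'a::metric_space \<Rightarrow> real"
  assumes sub: "is_subsolution 0 l f" and inf: "(INF x. ereal (f x)) = 0"
    and nonneg: "\<And>x. 0 \<le> l x" and lim: "(\<lambda>n. l (xs n)) \<longlonglongrightarrow> 0"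
    and summ: "summable (path_cost l xs)" and e: "0 < e"
  shows "\<exists>N. f (xs N) \<le> e"
proof (rule ccontr)
  assume "\<not> ?thesis"
  then have big: "e < f (xs n)" for n by (simp add: not_le)
  have "(INF x. ereal (f x)) < ereal (e / 2)" using inf e by simp
  then obtain y where y: "f y < e / 2" by (auto simp: INF_less_iff)
  define D where "D n = dist (xs n) y" for n
  have far: "e / 2 < l (xs n) * D n" for n
  proof -
    have "f (xs n) - f y \<le> l (xs n) * D n" using sub by (simp add: is_subsolution_def D_def)
    then show ?thesis using big[of n] y by linarith
  qed
  have D_pos: "0 < D n" for n
    using far[of n] e by (cases "D n = 0") (auto simp: D_def)
  have growth: "D (Suc n) \<le> D n * (1 + 2 / e * path_cost l xs n)" for n
  proof -
    have "D (Suc n) \<le> D n + dist (xs n) (xs (Suc n))"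
      unfolding D_def using dist_triangle[of "xs (Suc n)" y "xs n"] by (simp add: dist_commute)
    also have "dist (xs n) (xs (Suc n)) \<le> (2 / e * l (xs n) * D n) * dist (xs n) (xs (Suc n))"
      using far[of n] e by (intro mult_le_cancel_right1[THEN iffD2] impI) (simp add: field_simps)
    finally show ?thesis by (simp add: path_cost_def algebra_simps)
  qed
  have D_bound: "D n \<le> D 0 * exp (suminf (\<lambda>n. 2 / e * path_cost l xs n))" for n
  proof (rule relative_growth_bound[where a = "\<lambda>n. 2 / e * path_cost l xs n"])
    show "0 \<le> D n" for n using D_pos[of n] by simp
    show "0 \<le> 2 / e * path_cost l xs n" for n using e nonneg by (simp add: path_cost_def)
    show "summable (\<lambda>n. 2 / e * path_cost l xs n)" using summ by (rule summable_mult)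
  qed (rule growth)
  define k where "k = e / 2 / (D 0 * exp (suminf (\<lambda>n. 2 / e * path_cost l xs n)))"
  have "0 < k" using e D_pos[of 0] by (simp add: k_def)
  have "k \<le> l (xs n)" for n
  proof -
    have "k \<le> e / 2 / D n"
      unfolding k_def using e D_pos[of n] D_bound[of n] by (intro divide_left_mono) auto
    also have "\<dots> \<le> l (xs n)" using far[of n] D_pos[of n] by (simp add: divide_le_eq)
    finally show ?thesis .
  qed
  moreover obtain n where "l (xs n) < k"
    using order_tendstoD(2)[OF lim \<open>0 < k\<close>] by (auto dest: eventually_happens)
  ultimately show False by (simp add: not_le[symmetric])
qed

context
  fixes l :: "'a::metric_space \<Rightarrow> real"
  assumes nonneg: "\<And>x. 0 \<le> l x"
begin

lemma path_cost_nonneg: "0 \<le> path_cost l xs n"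
  by (simp add: path_cost_def nonneg)

lemma suminf_path_cost_case_nat:
  "(\<Sum>n. ereal (path_cost l (case_nat x ys) n)) = ereal (l x * dist x (ys 0)) + (\<Sum>n. ereal (path_cost l ys n))"
proof -
  have shift: "path_cost l (case_nat x ys) (Suc n) = path_cost l ys n" for n
    by (simp add: path_cost_def)
  have head: "path_cost l (case_nat x ys) 0 = l x * dist x (ys 0)"
    by (simp add: path_cost_def)
  have summable_iff: "summable (path_cost l (case_nat x ys)) \<longleftrightarrow> summable (path_cost l ys)"
    using summable_Suc_iff[of "path_cost l (case_nat x ys)"] shift by simp
  show ?thesis
  proof (cases "summable (path_cost l ys)")
    case True
    then have "suminf (path_cost l (case_nat x ys)) = l x * dist x (ys 0) + suminf (path_cost l ys)"
      using suminf_split_head[of "path_cost l (case_nat x ys)"] summable_iff shift head by simp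
    with True summable_iff show ?thesis by (simp add: suminf_ereal_nonneg path_cost_nonneg)
  qed (simp add: suminf_ereal_nonneg path_cost_nonneg summable_iff)
qed

lemma u0_nonneg: "0 \<le> u0 l x"
  unfolding u0_eq_INF_path_cost by (auto intro!: INF_greatest suminf_0_le simp: path_cost_nonneg)

lemma u0_le_step: "u0 l x \<le> ereal (l x * dist x y) + u0 l y"
proof -
  let ?A = "\<lambda>x. {xs. xs 0 = x \<and> (\<lambda>n. l (xs n)) \<longlonglongrightarrow> 0}"
  have "u0 l x \<le> ereal (l x * dist x y) + (\<Sum>n. ereal (path_cost l ys n))" if "ys \<in> ?A y" for ys
  proof -
    have "case_nat x ys \<in> ?A x"
      using that by (simp add: LIMSEQ_imp_Suc)
    then have "u0 l x \<le> (\<Sum>n. ereal (path_cost l (case_nat x ys) n))"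
      unfolding u0_eq_INF_path_cost by (rule INF_lower)
    with that show ?thesis by (simp add: suminf_path_cost_case_nat)
  qed
  then have "u0 l x \<le> (INF ys \<in> ?A y. ereal (l x * dist x y) + (\<Sum>n. ereal (path_cost l ys n)))"
    by (rule INF_greatest)
  also have "\<dots> = ereal (l x * dist x y) + u0 l y"
  proof (cases "?A y = {}")
    case False
    then show ?thesis unfolding u0_eq_INF_path_cost
      by (intro INF_ereal_add_right) (auto intro: suminf_0_le simp: path_cost_nonneg)
  next
    case True
    then show ?thesis unfolding u0_eq_INF_path_cost True by (simp add: top_ereal_def)
  qed
  finally show ?thesis .
qed

lemma u0_le_suminf_tail:
  assumes "(\<lambda>n. l (xs n)) \<longlonglongrightarrow> 0"
  shows "u0 l (xs N) \<le> (\<Sum>n. ereal (path_cost l xs (n + N)))"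
proof -
  have "(\<lambda>n. xs (n + N)) \<in> {ys. ys 0 = xs N \<and> (\<lambda>n. l (ys n)) \<longlonglongrightarrow> 0}"
    using LIMSEQ_ignore_initial_segment[OF assms] by simp
  then have "u0 l (xs N) \<le> (\<Sum>n. ereal (path_cost l (\<lambda>n. xs (n + N)) n))"
    unfolding u0_eq_INF_path_cost by (rule INF_lower)
  then show ?thesis by (simp add: path_cost_def)
qed

lemma u0_eventually_less:
  assumes lim: "(\<lambda>n. l (xs n)) \<longlonglongrightarrow> 0" and summ: "summable (path_cost l xs)" and e: "0 < e"
  shows "eventually (\<lambda>N. u0 l (xs N) < ereal e) sequentially"
proof -
  obtain N0 where N0: "\<And>N. N0 \<le> N \<Longrightarrow> norm (\<Sum>n. path_cost l xs (n + N)) < e"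
    using suminf_exist_split[OF e summ] by blast
  show ?thesis
  proof (rule eventually_sequentiallyI)
    fix N assume "N0 \<le> N"
    have "u0 l (xs N) \<le> ereal (\<Sum>n. path_cost l xs (n + N))"
      using u0_le_suminf_tail[OF lim, of N] summable_ignore_initial_segment[OF summ, of N]
      by (simp add: suminf_ereal')
    also have "\<dots> < ereal e" using N0[OF \<open>N0 \<le> N\<close>] by simp
    finally show "u0 l (xs N) < ereal e" .
  qed
qed

lemma u0_finite:
  assumes "H0 l"
  shows "u0 l x < \<infinity>"
proof -
  obtain xs where lim: "(\<lambda>n. l (xs n)) \<longlonglongrightarrow> 0" and summ: "summable (path_cost l xs)"
    using assms by (auto simp: H0_def path_cost_def[abs_def])
  have "u0 l x \<le> ereal (l x * dist x (xs 0)) + u0 l (xs 0)" by (rule u0_le_step)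
  also have "\<dots> \<le> ereal (l x * dist x (xs 0)) + ereal (suminf (path_cost l xs))"
    using u0_le_suminf_tail[OF lim, of 0] summ by (intro add_left_mono) (simp add: suminf_ereal')
  finally have "u0 l x \<le> ereal (l x * dist x (xs 0) + suminf (path_cost l xs))" by simp
  then show ?thesis by (rule le_less_trans) simp
qed

lemma subsolution_le_u0:
  assumes sub: "is_subsolution 0 l w"
    and small: "\<And>xs e. (\<lambda>n. l (xs n)) \<longlonglongrightarrow> 0 \<Longrightarrow> summable (path_cost l xs) \<Longrightarrow> 0 < e \<Longrightarrow>
      \<exists>N. w (xs N) \<le> e"
  shows "ereal (w x) \<le> u0 l x"
  unfolding u0_eq_INF_path_cost
proof (rule INF_greatest, safe)
  fix xs assume lim: "(\<lambda>n. l (xs n)) \<longlonglongrightarrow> 0" and x: "x = xs 0"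
  show "ereal (w (xs 0)) \<le> (\<Sum>n. ereal (path_cost l xs n))"
  proof (cases "summable (path_cost l xs)")
    case True
    have chain: "w (xs 0) \<le> w (xs N) + (\<Sum>n<N. path_cost l xs n)" for N
    proof (induction N)
      case (Suc N)
      have "w (xs N) \<le> w (xs (Suc N)) + path_cost l xs N"
        using sub by (simp add: is_subsolution_def path_cost_def algebra_simps)
      with Suc show ?case by simp
    qed simp
    have "w (xs 0) \<le> suminf (path_cost l xs) + e" if e: "0 < e" for e
    proof -
      obtain N where "w (xs N) \<le> e" using small[OF lim True e] by blast
      moreover have "(\<Sum>n<N. path_cost l xs n) \<le> suminf (path_cost l xs)"
        using True by (rule sum_le_suminf) (auto simp: path_cost_nonneg)
      ultimately show ?thesis using chain[of N] by simp
    qed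
    then have "w (xs 0) \<le> suminf (path_cost l xs)" by (rule field_le_epsilon)
    with True show ?thesis by (simp add: suminf_ereal_nonneg path_cost_nonneg)
  qed (simp add: suminf_ereal_nonneg path_cost_nonneg)
qed

end

lemma is_perron_solution_u0:
  fixes l :: "'a::metric_space \<Rightarrow> real"
  assumes nonneg: "\<And>x. 0 \<le> l x" and lsc_l: "lsc l" and H0: "H0 l"
  shows "is_perron_solution 0 l (u0 l)"
proof -
  define F where "F x = real_of_ereal (u0 l x)" for x
  have u0_F: "u0 l = (\<lambda>x. ereal (F x))"
  proof
    fix x show "u0 l x = ereal (F x)"
      using u0_nonneg[where l = l and x = x, OF nonneg] u0_finite[where l = l and x = x, OF nonneg H0]
      unfolding F_def by (cases "u0 l x") auto
  qed
  have sub: "is_subsolution 0 l F"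
    using u0_le_step[where l = l, OF nonneg] unfolding is_subsolution_def u0_F by (simp add: algebra_simps)
  have F_small: "eventually (\<lambda>N. F (xs N) < e) sequentially"
    if "(\<lambda>n. l (xs n)) \<longlonglongrightarrow> 0" "summable (path_cost l xs)" "0 < e" for xs e
    using u0_eventually_less[where l = l, OF nonneg that] by (simp add: u0_F)
  have maximal: "w x \<le> F x"
    if "is_subsolution 0 l w" "\<And>xs e. (\<lambda>n. l (xs n)) \<longlonglongrightarrow> 0 \<Longrightarrow> summable (path_cost l xs) \<Longrightarrow>
      0 < e \<Longrightarrow> \<exists>N. w (xs N) \<le> e" for w x
    using subsolution_le_u0[where l = l, OF nonneg that] by (simp add: u0_F)
  show ?thesis unfolding u0_F
  proof (rule is_perron_solutionI[OF order_refl lsc_l sub])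
    show "0 * F x \<le> l x" for x by (simp add: nonneg)
  next
    obtain xs where xs: "(\<lambda>n. l (xs n)) \<longlonglongrightarrow> 0" "summable (path_cost l xs)"
      using H0 by (auto simp: H0_def path_cost_def[abs_def])
    have "\<exists>x. F x < e" if e: "0 < e" for e
    proof -
      obtain N where "\<forall>n\<ge>N. F (xs n) < e"
        using F_small[OF xs e] by (auto simp: eventually_sequentially)
      then show ?thesis by blast
    qed
    moreover have "0 \<le> F x" for x
      using u0_nonneg[where l = l, OF nonneg] by (simp add: u0_F)
    ultimately show "(INF x. ereal (F x)) = 0" by (intro INF_ereal_eq_0)
  next
    fix w k x
    assume w: "is_subsolution 0 l w" "0 < k" "\<And>z. F z \<le> w z" "\<And>z. F z < w z \<Longrightarrow> 0 * w z + k \<le> l z"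
    show "w x \<le> F x"
    proof (rule maximal[OF w(1)])
      fix xs and e :: real
      assume lim: "(\<lambda>n. l (xs n)) \<longlonglongrightarrow> 0" and "summable (path_cost l xs)" "0 < e"
      then have "eventually (\<lambda>N. F (xs N) < e) sequentially" by (rule F_small)
      moreover have "eventually (\<lambda>N. l (xs N) < k) sequentially" using lim w(2) by (rule order_tendstoD)
      ultimately have "eventually (\<lambda>N. F (xs N) < e \<and> l (xs N) < k) sequentially"
        by (rule eventually_conj)
      then obtain N where N: "F (xs N) < e" "l (xs N) < k"
        by (auto simp: eventually_sequentially)
      then have "\<not> F (xs N) < w (xs N)" using w(4)[of "xs N"] by auto
      with N(1) show "\<exists>N. w (xs N) \<le> e" by (intro exI[of _ N]) simp
    qed
  next
    fix v x assume "is_solution 0 l v"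
    then obtain f where f: "v = (\<lambda>x. ereal (f x))" "is_subsolution 0 l f" "(INF x. ereal (f x)) = 0"
      by (auto elim: solution_imp_subsolution)
    have "f x \<le> F x"
      using maximal[OF f(2) subsolution_small_along_path[OF f(2,3) nonneg]] .
    with f(1) show "v x \<le> ereal (F x)" by simp
  qed
qed

theorem corollary4p7:
  fixes l :: "'a::metric_space \<Rightarrow> real"
  assumes nonneg: "\<And>x. l x \<ge> 0"
    and lsc_l: "lsc l"
    and inf0: "(INF x. l x) = 0"
  shows "(\<forall>lam>0. is_perron_solution lam l (Top_inf lam l (\<lambda>x. ereal (l x / lam))))
       \<and> (H0 l \<longrightarrow> is_perron_solution 0 l (u0 l))"
  using is_perron_solution_Top_inf[OF _ nonneg lsc_l inf0] is_perron_solution_u0[OF nonneg lsc_l]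
  by blast

end
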